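(* Let $\delta\in[0,1)$. For every $R>0$ for which $\omega_{\delta,R}$ exists, $\max_{[-R,R]}\omega_{\delta,R}<1-\delta$. Furthermore, if $\delta>0$, there exists $R_\delta\ge R^\omega_\delta$ such that for all $R\ge R_\delta$: $\max_{[-R,R]}\omega_{\delta,R}\ge 1-2\delta$, and there exists a unique $x_{\delta,R}\in(-R,R)$ such that $\omega_{\delta,R}$ is increasing on $[-R,x_{\delta,R}]$, decreasing on $[x_{\delta,R},R]$, and maximal at $x_{\delta,R}$.
   Context: Fixed parameters: $d>0$, $r>0$. For $\delta\in[0,1)$ and $R>0$, consider the boundary value problem $-d\omega''-\big(2\sqrt{r(1-\delta)d}-\delta\big)\omega'=r\omega(1-\delta-\omega)$ on $(-R,R)$, $\omega(\pm R)=0$. It is known that it admits a nonnegative nonzero solution, which is then unique, if and only if $R$ is at least a threshold $R^\omega_\delta>0$; this solution is denoted $\omega_{\delta,R}$. *)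

theory Defs
  imports "HOL-Analysis.Analysis"
begin

definition bvp_solution :: "real \<Rightarrow> real \<Rightarrow> real \<Rightarrow> real \<Rightarrow> (real \<Rightarrow> real) \<Rightarrow> bool" where
  "bvp_solution d r \<delta> R w \<longleftrightarrow>
     continuous_on {-R..R} w \<and> w (-R) = 0 \<and> w R = 0 \<and>
     (\<exists>w' w''. \<forall>x\<in>{-R<..<R}.
        (w has_real_derivative w' x) (at x) \<and>
        (w' has_real_derivative w'' x) (at x) \<and>
        - d * w'' x - (2 * sqrt (r * (1 - \<delta>) * d) - \<delta>) * w' x
          = r * w x * (1 - \<delta> - w x))"

text \<open>Nonnegative nonzero solution (this is omega_{delta,R}, which is unique when it exists).\<close>
definition omega_sol :: "real \<Rightarrow> real \<Rightarrow> real \<Rightarrow> real \<Rightarrow> (real \<Rightarrow> real) \<Rightarrow> bool" where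
  "omega_sol d r \<delta> R w \<longleftrightarrow> bvp_solution d r \<delta> R w \<and>
     (\<forall>x\<in>{-R..R}. 0 \<le> w x) \<and> (\<exists>x\<in>{-R..R}. w x \<noteq> 0)"

definition omega_threshold :: "real \<Rightarrow> real \<Rightarrow> real \<Rightarrow> real" where
  "omega_threshold d r \<delta> = Inf {R. 0 < R \<and> (\<exists>w. omega_sol d r \<delta> R w)}"

end

theory Submission
  imports Defs
begin

text \<open>
  At an interior maximum \<open>w' = 0\<close> and \<open>w'' \<le> 0\<close>, so the equation forces \<open>w \<le> 1 - \<delta>\<close>.
  Equality there, like an interior zero, would let \<open>w\<close> touch a constant equilibrium with
  matching derivative, and uniqueness for the linearised equation (a Gronwall estimate for
  \<open>w\<^sup>2 + w'\<^sup>2\<close>) would make \<open>w\<close> constant.  Hence \<open>0 < w < 1 - \<delta>\<close> inside, the equation gives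
  \<open>w'' < 0\<close> at every critical point, so all critical points are strict local maxima; there is
  therefore only one, and \<open>w\<close> is unimodal.

  Writing \<open>c = 2 sqrt (r (1 - \<delta>) d) - \<delta>\<close>, a solution forces \<open>c\<^sup>2 < 4 d r (1 - \<delta>)\<close>: otherwise
  \<open>e\<^bsup>c x / (2 d)\<^esup> w\<close> is convex, vanishes at \<open>\<plusminus>R\<close> and is positive inside.  Under this condition
  the phase angle \<open>arctan (w' (1 - \<delta> - w) / w)\<close> is strictly decreasing: the numerator of its
  derivative is minus a positive definite quadratic form in \<open>w'\<close> and \<open>(1 - \<delta> - w) w\<close>, and
  wherever \<open>w < 1 - 2 \<delta>\<close> this gives a rate \<open>\<epsilon> > 0\<close> independent of \<open>R\<close>.  As the angle stays in
  \<open>(-\<pi>/2, \<pi>/2)\<close>, a solution below \<open>1 - 2 \<delta>\<close> must have \<open>R \<epsilon> < \<pi>\<close>, so \<open>R\<^sub>\<delta> = max R\<^sup>\<omega>\<^sub>\<delta> (\<pi> / \<epsilon>)\<close>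
  works.
\<close>

lemma gronwall_vanishing:
  fixes E E' :: "real \<Rightarrow> real" and L a b x0 x :: real
  assumes x0: "x0 \<in> {a<..<b}" and x: "x \<in> {a<..<b}"
    and E': "\<And>t. t \<in> {a<..<b} \<Longrightarrow> (E has_real_derivative E' t) (at t)"
    and growth: "\<And>t. t \<in> {a<..<b} \<Longrightarrow> \<bar>E' t\<bar> \<le> L * E t"
    and nonneg: "\<And>t. 0 \<le> E t" and "E x0 = 0"
  shows "E x = 0"
proof -
  have "E x \<le> 0"
  proof (cases "x0 \<le> x")
    case True
    have "E x * exp (-L*x) \<le> E x0 * exp (-L*x0)"
    proof (rule DERIV_nonpos_imp_nonincreasing[OF True, of "\<lambda>t. E t * exp (-L*t)"])
      fix t assume "x0 \<le> t" "t \<le> x"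
      with x0 x have t: "t \<in> {a<..<b}" by auto
      have "(E' t - L * E t) * exp (-L*t) \<le> 0"
        using growth[OF t] by (intro mult_nonpos_nonneg) auto
      moreover have "((\<lambda>t. E t * exp (-L*t)) has_real_derivative (E' t - L * E t) * exp (-L*t)) (at t)"
        by (auto intro!: derivative_eq_intros E'[OF t] simp: algebra_simps)
      ultimately show "\<exists>y. ((\<lambda>t. E t * exp (-L*t)) has_real_derivative y) (at t) \<and> y \<le> 0"
        by blast
    qed
    then show ?thesis using \<open>E x0 = 0\<close> by (simp add: mult_le_0_iff)
  next
    case False
    have "E x * exp (L*x) \<le> E x0 * exp (L*x0)"
    proof (rule DERIV_nonneg_imp_nondecreasing[of x x0 "\<lambda>t. E t * exp (L*t)"])
      show "x \<le> x0" using False by simp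
      fix t assume "x \<le> t" "t \<le> x0"
      with x0 x have t: "t \<in> {a<..<b}" by auto
      have "0 \<le> (E' t + L * E t) * exp (L*t)"
        using growth[OF t] by (intro mult_nonneg_nonneg) auto
      moreover have "((\<lambda>t. E t * exp (L*t)) has_real_derivative (E' t + L * E t) * exp (L*t)) (at t)"
        by (auto intro!: derivative_eq_intros E'[OF t] simp: algebra_simps)
      ultimately show "\<exists>y. ((\<lambda>t. E t * exp (L*t)) has_real_derivative y) (at t) \<and> 0 \<le> y"
        by blast
    qed
    then show ?thesis using \<open>E x0 = 0\<close> by (simp add: mult_le_0_iff)
  qed
  with nonneg[of x] show ?thesis by simp
qed

lemma linear_ode2_vanishing:
  fixes u u' u'' p q :: "real \<Rightarrow> real" and K a b x0 x :: real
  assumes x0: "x0 \<in> {a<..<b}" and x: "x \<in> {a<..<b}"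
    and u': "\<And>t. t \<in> {a<..<b} \<Longrightarrow> (u has_real_derivative u' t) (at t)"
    and u'': "\<And>t. t \<in> {a<..<b} \<Longrightarrow> (u' has_real_derivative u'' t) (at t)"
    and ode: "\<And>t. t \<in> {a<..<b} \<Longrightarrow> u'' t = p t * u' t + q t * u t"
    and bound: "\<And>t. t \<in> {a<..<b} \<Longrightarrow> \<bar>p t\<bar> \<le> K \<and> \<bar>q t\<bar> \<le> K"
    and "u x0 = 0" "u' x0 = 0"
  shows "u x = 0"
proof -
  define E where "E t = (u t)\<^sup>2 + (u' t)\<^sup>2" for t
  have "E x = 0"
  proof (rule gronwall_vanishing[OF x0 x])
    fix t assume t: "t \<in> {a<..<b}"
    show "(E has_real_derivative 2 * u t * u' t + 2 * u' t * u'' t) (at t)"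
      unfolding E_def using u'[OF t] u''[OF t] by (auto intro!: derivative_eq_intros)
    have K: "\<bar>p t\<bar> \<le> K" "\<bar>q t\<bar> \<le> K" using bound[OF t] by auto
    have uu': "\<bar>2 * u t * u' t\<bar> \<le> E t"
      unfolding E_def by (smt (verit) power2_diff power2_sum zero_le_power2)
    have "\<bar>2 * u' t * u'' t\<bar> = \<bar>2 * p t * (u' t)\<^sup>2 + q t * (2 * u t * u' t)\<bar>"
      by (simp add: ode[OF t] algebra_simps power2_eq_square)
    also have "\<dots> \<le> \<bar>p t\<bar> * (2 * (u' t)\<^sup>2) + \<bar>q t\<bar> * \<bar>2 * u t * u' t\<bar>"
      by (rule order_trans[OF abs_triangle_ineq]) (simp add: abs_mult)
    also have "\<dots> \<le> K * (2 * E t) + K * E t"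
      using K uu' by (intro add_mono mult_mono) (auto simp: E_def)
    finally show "\<bar>2 * u t * u' t + 2 * u' t * u'' t\<bar> \<le> (1 + 3 * K) * E t"
      using uu' by (simp add: algebra_simps)
  qed (use \<open>u x0 = 0\<close> \<open>u' x0 = 0\<close> in \<open>auto simp: E_def\<close>)
  then show ?thesis by (simp add: E_def)
qed

lemma nonneg_second_deriv_vanishing_ends_imp_nonpos:
  fixes v v' v'' :: "real \<Rightarrow> real" and a b x :: real
  assumes cont: "continuous_on {a..b} v" and "v a = 0" "v b = 0"
    and v': "\<And>t. t \<in> {a<..<b} \<Longrightarrow> (v has_real_derivative v' t) (at t)"
    and v'': "\<And>t. t \<in> {a<..<b} \<Longrightarrow> (v' has_real_derivative v'' t) (at t)"
    and convex: "\<And>t. t \<in> {a<..<b} \<Longrightarrow> 0 \<le> v'' t"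
    and x: "x \<in> {a..b}"
  shows "v x \<le> 0"
proof (rule ccontr)
  assume "\<not> v x \<le> 0"
  obtain m where m: "m \<in> {a..b}" "\<And>t. t \<in> {a..b} \<Longrightarrow> v t \<le> v m"
    using continuous_attains_sup[OF compact_Icc _ cont] x by auto
  with \<open>\<not> v x \<le> 0\<close> x have "0 < v m" by force
  with m(1) \<open>v a = 0\<close> \<open>v b = 0\<close> have mI: "m \<in> {a<..<b}" by (cases "m = a \<or> m = b") auto
  have "v' m = 0"
    by (rule DERIV_local_max[OF v'[OF mI], of "min (b - m) (m - a)"])
      (use mI m(2) in \<open>auto simp: abs_less_iff\<close>)
  have v'_nonneg: "0 \<le> v' t" if "t \<in> {m<..<b}" for t
  proof -
    have "v' m \<le> v' t"
    proof (rule DERIV_nonneg_imp_nondecreasing[of m t v'])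
      fix s assume "m \<le> s" "s \<le> t"
      with mI that have "s \<in> {a<..<b}" by auto
      then show "\<exists>y. (v' has_real_derivative y) (at s) \<and> 0 \<le> y" using v'' convex by blast
    qed (use that in auto)
    with \<open>v' m = 0\<close> show ?thesis by simp
  qed
  have "v m \<le> v b"
  proof (rule DERIV_nonneg_imp_increasing_open[of m b v])
    fix t assume "m < t" "t < b"
    with mI have "t \<in> {a<..<b}" "t \<in> {m<..<b}" by auto
    with v' v'_nonneg show "\<exists>y. (v has_real_derivative y) (at t) \<and> 0 \<le> y" by blast
  next
    show "continuous_on {m..b} v" using cont by (rule continuous_on_subset) (use mI in auto)
  qed (use mI in auto)
  with \<open>0 < v m\<close> \<open>v b = 0\<close> show False by simp
qed

text \<open>The drift \<open>c\<close> is a parameter so that the reflection \<open>x \<mapsto> -x\<close>, which turns the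
  drift into \<open>-c\<close>, is again an instance.\<close>

locale kpp_solution =
  fixes d r \<delta> R c :: real and w w' w'' :: "real \<Rightarrow> real"
  assumes d_pos: "0 < d" and r_pos: "0 < r" and \<delta>_nonneg: "0 \<le> \<delta>" and \<delta>_less_1: "\<delta> < 1"
    and R_pos: "0 < R"
    and cont: "continuous_on {-R..R} w" and left_zero: "w (-R) = 0" and right_zero: "w R = 0"
    and w': "\<And>x. x \<in> {-R<..<R} \<Longrightarrow> (w has_real_derivative w' x) (at x)"
    and w'': "\<And>x. x \<in> {-R<..<R} \<Longrightarrow> (w' has_real_derivative w'' x) (at x)"
    and ode: "\<And>x. x \<in> {-R<..<R} \<Longrightarrow> - d * w'' x - c * w' x = r * w x * (1 - \<delta> - w x)"
    and nonneg: "\<And>x. x \<in> {-R..R} \<Longrightarrow> 0 \<le> w x" and nontrivial: "\<exists>x\<in>{-R..R}. w x \<noteq> 0"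
begin

lemma touching_equilibrium_imp_equilibrium:
  assumes e: "e = 0 \<or> e = 1 - \<delta>" and x0: "x0 \<in> {-R<..<R}" and "w x0 = e" "w' x0 = 0"
    and x: "x \<in> {-R<..<R}"
  shows "w x = e"
proof -
  define q where "q t = - r * (1 - \<delta> - e - w t) / d" for t
  have "bounded (q ` {-R..R})"
    unfolding q_def by (intro compact_imp_bounded compact_continuous_image compact_Icc continuous_intros cont)
      (use d_pos in auto)
  then obtain B where B: "\<forall>t\<in>{-R..R}. \<bar>q t\<bar> \<le> B"
    unfolding bounded_pos by auto
  have "w x - e = 0"
  proof (rule linear_ode2_vanishing[OF x0 x, where p = "\<lambda>_. - c / d" and q = q and K = "max (\<bar>c\<bar> / d) B"])
    fix t assume t: "t \<in> {-R<..<R}"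
    show "((\<lambda>t. w t - e) has_real_derivative w' t) (at t)"
      using w'[OF t] by (auto intro!: derivative_eq_intros)
    show "(w' has_real_derivative w'' t) (at t)" by (rule w''[OF t])
    have "r * e * (1 - \<delta> - e) = 0" using e by auto
    then have "d * w'' t = - c * w' t - r * (1 - \<delta> - e - w t) * (w t - e)"
      using ode[OF t] by (simp add: algebra_simps)
    then have "w'' t = (- c * w' t - r * (1 - \<delta> - e - w t) * (w t - e)) / d"
      using d_pos by (simp add: eq_divide_eq mult.commute)
    then show "w'' t = - c / d * w' t + q t * (w t - e)"
      unfolding q_def by (simp add: diff_divide_distrib)
    show "\<bar>- c / d\<bar> \<le> max (\<bar>c\<bar> / d) B \<and> \<bar>q t\<bar> \<le> max (\<bar>c\<bar> / d) B"
      using B t d_pos by (auto simp: le_max_iff_disj)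
  qed (use \<open>w x0 = e\<close> \<open>w' x0 = 0\<close> in auto)
  then show ?thesis by simp
qed

lemma interior_pos:
  assumes x: "x \<in> {-R<..<R}"
  shows "0 < w x"
proof (rule ccontr)
  assume "\<not> 0 < w x"
  with nonneg[of x] x have "w x = 0" by auto
  have "w' x = 0"
    by (rule DERIV_local_min[OF w'[OF x], of "min (R - x) (x + R)"])
      (use x nonneg \<open>w x = 0\<close> in \<open>auto simp: abs_less_iff\<close>)
  have "w y = 0" if "y \<in> {-R..R}" for y
    using touching_equilibrium_imp_equilibrium[OF _ x \<open>w x = 0\<close> \<open>w' x = 0\<close>, of y]
      left_zero right_zero that by (cases "y = R \<or> y = -R") auto
  with nontrivial show False by blast
qed

lemma interior_max_exists:
  obtains x0 where "x0 \<in> {-R<..<R}" "\<And>x. x \<in> {-R..R} \<Longrightarrow> w x \<le> w x0"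
proof -
  obtain x0 where x0: "x0 \<in> {-R..R}" "\<And>x. x \<in> {-R..R} \<Longrightarrow> w x \<le> w x0"
    using continuous_attains_sup[OF compact_Icc _ cont] R_pos by auto
  have "0 < w 0" using interior_pos R_pos by simp
  with x0(2)[of 0] R_pos have "w x0 \<noteq> 0" by auto
  with x0(1) left_zero right_zero have "x0 \<in> {-R<..<R}" by (cases "x0 = R \<or> x0 = -R") auto
  with x0(2) that show ?thesis by blast
qed

lemma Sup_eq_interior_max:
  assumes "x0 \<in> {-R<..<R}" "\<And>x. x \<in> {-R..R} \<Longrightarrow> w x \<le> w x0"
  shows "(SUP x\<in>{-R..R}. w x) = w x0"
  by (rule cSup_eq_maximum) (use assms in auto)

lemma deriv_zero_at_max:
  assumes y: "y \<in> {-R<..<R}" and max: "\<And>x. x \<in> {-R..R} \<Longrightarrow> w x \<le> w y"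
  shows "w' y = 0"
  by (rule DERIV_local_max[OF w'[OF y], of "min (R - y) (y + R)"])
    (use y max in \<open>auto simp: abs_less_iff\<close>)

lemma second_deriv_nonpos_at_max:
  assumes y: "y \<in> {-R<..<R}" and max: "\<And>x. x \<in> {-R..R} \<Longrightarrow> w x \<le> w y"
  shows "w'' y \<le> 0"
proof (rule ccontr)
  assume "\<not> w'' y \<le> 0"
  then obtain h where h: "0 < h" "\<And>t. 0 < t \<Longrightarrow> t < h \<Longrightarrow> w' y < w' (y + t)"
    using DERIV_pos_inc_right[OF w''[OF y]] by force
  define t where "t = min (h / 2) ((R - y) / 2)"
  have "t \<le> h / 2" "t \<le> (R - y) / 2"
    unfolding t_def by (rule min.cobounded1, rule min.cobounded2)
  with h(1) y have t: "0 < t" "t < h" "y + t < R" by (auto simp: t_def)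
  have "w y < w (y + t)"
  proof (rule DERIV_pos_imp_increasing_open[of y "y + t" w])
    fix s assume "y < s" "s < y + t"
    with y t have "s \<in> {-R<..<R}" "0 < w' s"
      using h(2)[of "s - y"] deriv_zero_at_max[OF y max] by auto
    with w' show "\<exists>l. (w has_real_derivative l) (at s) \<and> 0 < l" by blast
  next
    show "continuous_on {y..y + t} w" using cont by (rule continuous_on_subset) (use y t in auto)
  qed (use t in auto)
  with max[of "y + t"] y t show False by auto
qed

lemma below_capacity:
  assumes x: "x \<in> {-R..R}"
  shows "w x < 1 - \<delta>"
proof -
  obtain x0 where x0: "x0 \<in> {-R<..<R}" and max: "\<And>x. x \<in> {-R..R} \<Longrightarrow> w x \<le> w x0"
    using interior_max_exists by blast
  have "0 \<le> d * - w'' x0" using d_pos second_deriv_nonpos_at_max[OF x0 max]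
    by (simp add: mult_nonneg_nonpos)
  with ode[OF x0] deriv_zero_at_max[OF x0 max] have "0 \<le> r * w x0 * (1 - \<delta> - w x0)" by simp
  moreover have "0 < r * w x0" using r_pos interior_pos[OF x0] by simp
  ultimately have le: "w x0 \<le> 1 - \<delta>" by (simp add: zero_le_mult_iff)
  have "w x0 \<noteq> 1 - \<delta>"
  proof
    assume top: "w x0 = 1 - \<delta>"
    obtain t where t: "x0 \<le> t" "t \<le> R" "w t = (1 - \<delta>) / 2"
      using IVT2'[of w R "(1 - \<delta>) / 2" x0] top right_zero \<delta>_less_1 x0
        continuous_on_subset[OF cont, of "{x0..R}"] by auto
    with right_zero \<delta>_less_1 x0 have "t \<in> {-R<..<R}" by (cases "t = R") auto
    with touching_equilibrium_imp_equilibrium[OF _ x0 top deriv_zero_at_max[OF x0 max]] t(3) \<delta>_less_1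
    show False by auto
  qed
  with le max[OF x] show ?thesis by simp
qed

lemma Sup_below_capacity: "(SUP x\<in>{-R..R}. w x) < 1 - \<delta>"
proof -
  obtain x0 where "x0 \<in> {-R<..<R}" "\<And>x. x \<in> {-R..R} \<Longrightarrow> w x \<le> w x0"
    using interior_max_exists by blast
  with Sup_eq_interior_max below_capacity[of x0] show ?thesis by auto
qed

lemma second_deriv_neg_at_critical:
  assumes y: "y \<in> {-R<..<R}" and "w' y = 0"
  shows "w'' y < 0"
proof -
  have "0 < r * w y * (1 - \<delta> - w y)"
    using r_pos interior_pos[OF y] below_capacity[of y] y by auto
  with ode[OF y] \<open>w' y = 0\<close> have "0 < d * - w'' y" by simp
  with d_pos show ?thesis by (simp add: mult_less_0_iff)
qed

lemma critical_imp_strict_local_max: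
  assumes y: "y \<in> {-R<..<R}" and "w' y = 0"
  obtains h where "0 < h" "\<And>x. 0 < \<bar>x - y\<bar> \<Longrightarrow> \<bar>x - y\<bar> < h \<Longrightarrow> w x < w y"
proof -
  obtain h1 where h1: "0 < h1" "\<And>t. 0 < t \<Longrightarrow> t < h1 \<Longrightarrow> w' (y + t) < 0"
    using DERIV_neg_dec_right[OF w''[OF y] second_deriv_neg_at_critical[OF assms]] \<open>w' y = 0\<close>
    by force
  obtain h2 where h2: "0 < h2" "\<And>t. 0 < t \<Longrightarrow> t < h2 \<Longrightarrow> 0 < w' (y - t)"
    using DERIV_neg_dec_left[OF w''[OF y] second_deriv_neg_at_critical[OF assms]] \<open>w' y = 0\<close>
    by force
  define h where "h = min (min h1 h2) (min (R - y) (y + R))"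
  have "0 < h" using h1 h2 y by (simp add: h_def)
  moreover have "w x < w y" if "0 < \<bar>x - y\<bar>" "\<bar>x - y\<bar> < h" for x
  proof -
    have sub: "{min x y..max x y} \<subseteq> {-R<..<R}" using that y by (auto simp: h_def)
    have cont_xy: "continuous_on {min x y..max x y} w"
      using cont by (rule continuous_on_subset) (use sub in auto)
    show ?thesis
    proof (cases "y < x")
      case True
      show ?thesis
      proof (rule DERIV_neg_imp_decreasing_open[of y x w])
        fix s assume "y < s" "s < x"
        with sub True that h1(2)[of "s - y"] have "s \<in> {-R<..<R}" "w' s < 0"
          by (auto simp: h_def)
        with w' show "\<exists>l. (w has_real_derivative l) (at s) \<and> l < 0" by blast
      qed (use True cont_xy in auto)
    next
      case False
      with that have "x < y" by auto
      show ?thesis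
      proof (rule DERIV_pos_imp_increasing_open[of x y w])
        fix s assume "x < s" "s < y"
        with sub that h2(2)[of "y - s"] have "s \<in> {-R<..<R}" "0 < w' s"
          by (auto simp: h_def)
        with w' show "\<exists>l. (w has_real_derivative l) (at s) \<and> 0 < l" by blast
      qed (use \<open>x < y\<close> cont_xy in auto)
    qed
  qed
  ultimately show ?thesis using that by blast
qed

lemma critical_point_unique:
  assumes y1: "y1 \<in> {-R<..<R}" "w' y1 = 0" and y2: "y2 \<in> {-R<..<R}" "w' y2 = 0"
  shows "y1 = y2"
proof (rule ccontr)
  assume "y1 \<noteq> y2"
  define a b where "a = min y1 y2" and "b = max y1 y2"
  have ab: "a < b" "a \<in> {-R<..<R}" "b \<in> {-R<..<R}" "w' a = 0" "w' b = 0"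
    using \<open>y1 \<noteq> y2\<close> y1 y2 by (auto simp: a_def b_def min_def max_def)
  have cont_ab: "continuous_on {a..b} w" using cont by (rule continuous_on_subset) (use ab in auto)
  obtain m where m: "m \<in> {a..b}" "\<And>x. x \<in> {a..b} \<Longrightarrow> w m \<le> w x"
    using continuous_attains_inf[OF compact_Icc _ cont_ab] ab(1) by force
  have mI: "m \<in> {-R<..<R}" using m(1) ab(2,3) by auto
  have "w' m = 0"
  proof (cases "m = a \<or> m = b")
    case False
    with m(1) have "m \<in> {a<..<b}" by auto
    then show ?thesis
      by (intro DERIV_local_min[OF w'[OF mI], of "min (b - m) (m - a)"])
        (use m(2) in \<open>auto simp: abs_less_iff\<close>)
  qed (use ab in auto)
  then obtain h where h: "0 < h" "\<And>x. 0 < \<bar>x - m\<bar> \<Longrightarrow> \<bar>x - m\<bar> < h \<Longrightarrow> w x < w m"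
    using critical_imp_strict_local_max[OF mI] by blast
  define x where "x = (if m < b then m + min (h / 2) (b - m) else m - min (h / 2) (b - a))"
  have "x \<in> {a..b}" "0 < \<bar>x - m\<bar>" "\<bar>x - m\<bar> < h"
    using m(1) ab(1) h(1) by (auto simp: x_def min_def)
  with h(2) m(2) show False by force
qed

lemma rising_before_peak:
  assumes x0: "x0 \<in> {-R<..<R}" and max: "\<And>x. x \<in> {-R..R} \<Longrightarrow> w x \<le> w x0"
    and z: "z \<in> {-R<..<x0}"
  shows "0 < w' z"
proof (rule ccontr)
  assume "\<not> 0 < w' z"
  from z x0 have zI: "z \<in> {-R<..<R}" by auto
  have "continuous_on {-R..z} w" using cont by (rule continuous_on_subset) (use zI in auto)
  then obtain l \<xi> where \<xi>: "-R < \<xi>" "\<xi> < z" "(w has_real_derivative l) (at \<xi>)"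
    and mvt: "w z - w (-R) = (z + R) * l"
    using MVT[of "-R" z w] zI w' by (force simp: real_differentiable_def)
  have \<xi>I: "\<xi> \<in> {-R<..<R}" using \<xi> zI by auto
  have "0 < (z + R) * l" using mvt interior_pos[OF zI] left_zero by simp
  with zI DERIV_unique[OF \<xi>(3) w'[OF \<xi>I]] have "0 < w' \<xi>" by (simp add: zero_less_mult_iff)
  have "continuous_on {\<xi>..z} w'"
    using \<xi>I zI by (intro continuous_at_imp_continuous_on ballI DERIV_isCont[OF w'']) auto
  then obtain t where t: "\<xi> \<le> t" "t \<le> z" "w' t = 0"
    using IVT2'[of w' z 0 \<xi>] \<open>\<not> 0 < w' z\<close> \<open>0 < w' \<xi>\<close> \<xi> by force
  have "t = x0"
    by (rule critical_point_unique[OF _ t(3) x0 deriv_zero_at_max[OF x0 max]]) (use t \<xi>I zI in auto)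
  with t z show False by auto
qed

lemma mirror: "kpp_solution d r \<delta> R (- c) (\<lambda>x. w (- x)) (\<lambda>x. - w' (- x)) (\<lambda>x. w'' (- x))"
proof unfold_locales
  show "continuous_on {-R..R} (\<lambda>x. w (- x))"
    by (rule continuous_on_compose2[OF cont]) (auto intro: continuous_intros)
  fix x assume x: "x \<in> {-R<..<R}"
  then have "- x \<in> {-R<..<R}" by auto
  then show "((\<lambda>x. w (- x)) has_real_derivative - w' (- x)) (at x)"
    and "((\<lambda>x. - w' (- x)) has_real_derivative w'' (- x)) (at x)"
    and "- d * w'' (- x) - - c * - w' (- x) = r * w (- x) * (1 - \<delta> - w (- x))"
    using DERIV_mirror[THEN iffD1, OF w'] DERIV_minus[OF DERIV_mirror[THEN iffD1, OF w'']] ode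
    by simp_all
next
  show "\<exists>x\<in>{-R..R}. w (- x) \<noteq> 0"
    using nontrivial by (metis atLeastAtMost_iff minus_minus neg_le_iff_le)
qed (use d_pos r_pos \<delta>_nonneg \<delta>_less_1 R_pos left_zero right_zero nonneg in auto)

lemma falling_after_peak:
  assumes x0: "x0 \<in> {-R<..<R}" and max: "\<And>x. x \<in> {-R..R} \<Longrightarrow> w x \<le> w x0"
    and z: "z \<in> {x0<..<R}"
  shows "w' z < 0"
  using kpp_solution.rising_before_peak[OF mirror, of "- x0" "- z"] x0 max z
  by (auto simp: minus_le_iff le_minus_iff)

lemma unique_peak:
  "\<exists>!x0. x0 \<in> {-R<..<R} \<and> strict_mono_on {-R..x0} w \<and>
     (\<forall>a\<in>{x0..R}. \<forall>b\<in>{x0..R}. a < b \<longrightarrow> w b < w a) \<and> w x0 = (SUP x\<in>{-R..R}. w x)"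
proof -
  obtain x0 where x0: "x0 \<in> {-R<..<R}" and max: "\<And>x. x \<in> {-R..R} \<Longrightarrow> w x \<le> w x0"
    using interior_max_exists by blast
  have cont_sub: "continuous_on {a..b} w" if "-R \<le> a" "b \<le> R" for a b
    using cont by (rule continuous_on_subset) (use that in auto)
  have rising: "strict_mono_on {-R..x0} w"
  proof (rule strict_mono_onI)
    fix a b assume ab: "a \<in> {-R..x0}" "b \<in> {-R..x0}" "a < b"
    show "w a < w b"
    proof (rule DERIV_pos_imp_increasing_open[OF ab(3)])
      fix s assume "a < s" "s < b"
      with ab x0 have "s \<in> {-R<..<R}" "s \<in> {-R<..<x0}" by auto
      with w' rising_before_peak[OF x0 max] show "\<exists>l. (w has_real_derivative l) (at s) \<and> 0 < l"
        by blast
    qed (use ab x0 cont_sub in auto)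
  qed
  have falling: "\<forall>a\<in>{x0..R}. \<forall>b\<in>{x0..R}. a < b \<longrightarrow> w b < w a"
  proof (intro ballI impI)
    fix a b assume ab: "a \<in> {x0..R}" "b \<in> {x0..R}" "a < b"
    show "w b < w a"
    proof (rule DERIV_neg_imp_decreasing_open[OF ab(3)])
      fix s assume "a < s" "s < b"
      with ab x0 have "s \<in> {-R<..<R}" "s \<in> {x0<..<R}" by auto
      with w' falling_after_peak[OF x0 max] show "\<exists>l. (w has_real_derivative l) (at s) \<and> l < 0"
        by blast
    qed (use ab x0 cont_sub in auto)
  qed
  have top: "w x0 = (SUP x\<in>{-R..R}. w x)" using Sup_eq_interior_max[OF x0 max] by simp
  show ?thesis
  proof (rule ex1I[of _ x0])
    fix y assume "y \<in> {-R<..<R} \<and> strict_mono_on {-R..y} w \<and>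
      (\<forall>a\<in>{y..R}. \<forall>b\<in>{y..R}. a < b \<longrightarrow> w b < w a) \<and> w y = (SUP x\<in>{-R..R}. w x)"
    then have y: "y \<in> {-R<..<R}" "w y = w x0"
      and y_falling: "\<forall>a\<in>{y..R}. \<forall>b\<in>{y..R}. a < b \<longrightarrow> w b < w a"
      using top by auto
    show "y = x0"
    proof (rule linorder_cases[of y x0])
      assume "y < x0"
      then have "w x0 < w y" using y_falling[rule_format, of y x0] x0 by auto
      with y show ?thesis by simp
    next
      assume "x0 < y"
      then have "w y < w x0" using falling[rule_format, of x0 y] y(1) by auto
      with y show ?thesis by simp
    qed
  qed (use x0 rising falling top in blast)
qed

end

lemma quadratic_form_lower_bound:
  fixes A B C y z :: real
  assumes A: "0 < A" and C: "0 < C" and disc: "B\<^sup>2 < A * C"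
  shows "(A * C - B\<^sup>2) / (A + C) * (y\<^sup>2 + z\<^sup>2) \<le> A * y\<^sup>2 + 2 * B * y * z + C * z\<^sup>2"
proof -
  define l where "l = (A * C - B\<^sup>2) / (A + C)"
  have "l < A" unfolding l_def using A C disc
    by (simp add: divide_less_eq algebra_simps) (smt (verit) mult_pos_pos zero_le_power2)
  have "l * (A + C) = A * C - B\<^sup>2" unfolding l_def using A C by simp
  then have key: "(A - l) * (C - l) - B\<^sup>2 = l\<^sup>2" by (simp add: algebra_simps power2_eq_square)
  have "(A - l) * ((A - l) * y\<^sup>2 + 2 * B * y * z + (C - l) * z\<^sup>2)
      = ((A - l) * y + B * z)\<^sup>2 + ((A - l) * (C - l) - B\<^sup>2) * z\<^sup>2"
    by (simp add: algebra_simps power2_eq_square)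
  also have "\<dots> \<ge> 0" unfolding key by simp
  finally have "0 \<le> (A - l) * y\<^sup>2 + 2 * B * y * z + (C - l) * z\<^sup>2"
    using \<open>l < A\<close> by (simp add: zero_le_mult_iff)
  then show ?thesis unfolding l_def[symmetric] by (simp add: algebra_simps)
qed

text \<open>This is \<open>\<lambda> \<delta>\<^sup>2 / d\<close>, where \<open>\<lambda>\<close> is the bound of \<open>quadratic_form_lower_bound\<close> for
  the form \<open>d (1 - \<delta>) y\<^sup>2 + c y z + r z\<^sup>2\<close>.\<close>

definition phase_decay_rate :: "real \<Rightarrow> real \<Rightarrow> real \<Rightarrow> real \<Rightarrow> real" where
  "phase_decay_rate d r \<delta> c = (d * (1 - \<delta>) * r - (c / 2)\<^sup>2) / (d * (1 - \<delta>) + r) * \<delta>\<^sup>2 / d"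

lemma phase_decay_rate_pos:
  assumes "0 < d" "0 < r" "0 < \<delta>" "\<delta> < 1" "c\<^sup>2 < 4 * d * r * (1 - \<delta>)"
  shows "0 < phase_decay_rate d r \<delta> c"
proof -
  have "(c / 2)\<^sup>2 < d * (1 - \<delta>) * r" using assms(5) by (simp add: power_divide algebra_simps)
  moreover have "0 < d * (1 - \<delta>) + r" using assms by (simp add: add_pos_pos)
  ultimately show ?thesis using assms unfolding phase_decay_rate_def by simp
qed

context kpp_solution
begin

lemma drift_below_kpp_speed: "c\<^sup>2 < 4 * d * r * (1 - \<delta>)"
proof (rule ccontr)
  assume "\<not> c\<^sup>2 < 4 * d * r * (1 - \<delta>)"
  then have fast: "r * (1 - \<delta>) \<le> c\<^sup>2 / (4 * d)" using d_pos by (simp add: field_simps)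
  define a where "a = c / (2 * d)"
  define v where "v x = exp (a * x) * w x" for x
  have "v 0 \<le> 0"
  proof (rule nonneg_second_deriv_vanishing_ends_imp_nonpos[of "-R" R v])
    show "continuous_on {-R..R} v" unfolding v_def by (intro continuous_intros cont)
    show "v (-R) = 0" "v R = 0" by (simp_all add: v_def left_zero right_zero)
    fix x assume x: "x \<in> {-R<..<R}"
    show "(v has_real_derivative exp (a * x) * (a * w x + w' x)) (at x)"
      unfolding v_def using w'[OF x] by (auto intro!: derivative_eq_intros simp: algebra_simps)
    show "((\<lambda>x. exp (a * x) * (a * w x + w' x)) has_real_derivative
        exp (a * x) * (a\<^sup>2 * w x + 2 * a * w' x + w'' x)) (at x)"
      using w'[OF x] w''[OF x]
      by (auto intro!: derivative_eq_intros simp: algebra_simps power2_eq_square)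
    have coeffs: "2 * d * a = c" "d * a\<^sup>2 = c\<^sup>2 / (4 * d)"
      using d_pos by (simp_all add: a_def power2_eq_square)
    have "d * (a\<^sup>2 * w x + 2 * a * w' x + w'' x) = (d * a\<^sup>2) * w x + (2 * d * a) * w' x + d * w'' x"
      by (simp add: algebra_simps)
    also have "\<dots> = c\<^sup>2 / (4 * d) * w x + c * w' x + d * w'' x"
      by (simp only: coeffs)
    also have "\<dots> = w x * (c\<^sup>2 / (4 * d) - r * (1 - \<delta>) + r * w x)"
      using ode[OF x] by (simp add: algebra_simps)
    also have "\<dots> \<ge> 0" using fast interior_pos[OF x] r_pos by simp
    finally show "0 \<le> exp (a * x) * (a\<^sup>2 * w x + 2 * a * w' x + w'' x)"
      using d_pos by (simp add: zero_le_mult_iff)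
  qed (use R_pos in auto)
  with interior_pos[of 0] R_pos show False by (simp add: v_def)
qed

lemma phase_angle_has_derivative:
  assumes x: "x \<in> {-R<..<R}"
  shows "((\<lambda>x. arctan (w' x * (1 - \<delta> - w x) / w x)) has_real_derivative
      (w'' x * (1 - \<delta> - w x) * w x - (w' x)\<^sup>2 * (1 - \<delta>)) / ((w x)\<^sup>2 + (w' x)\<^sup>2 * (1 - \<delta> - w x)\<^sup>2)) (at x)"
proof -
  define u where "u = 1 - \<delta> - w x"
  define D where "D = (w x)\<^sup>2 + (w' x)\<^sup>2 * u\<^sup>2"
  have W: "0 < w x" by (rule interior_pos[OF x])
  then have "1 + (w' x * u / w x)\<^sup>2 = D / (w x)\<^sup>2"
    by (simp add: D_def field_simps power2_eq_square)
  then have "inverse (1 + (w' x * u / w x)\<^sup>2) = (w x)\<^sup>2 / D" by simp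
  moreover have "(w'' x * u - w' x * w' x) * w x - w' x * u * w' x = w'' x * u * w x - (w' x)\<^sup>2 * (u + w x)"
    by (simp add: algebra_simps power2_eq_square)
  ultimately have "inverse (1 + (w' x * u / w x)\<^sup>2) * ((w'' x * u - w' x * w' x) * w x - w' x * u * w' x) / (w x * w x)
      = (w'' x * u * w x - (w' x)\<^sup>2 * (u + w x)) / D"
    using W by (simp add: power2_eq_square)
  then show ?thesis
    using w'[OF x] w''[OF x] W unfolding u_def D_def by (auto intro!: derivative_eq_intros)
qed

lemma phase_angle_deriv_le:
  assumes x: "x \<in> {-R<..<R}" and low: "w x < 1 - 2 * \<delta>"
  shows "(w'' x * (1 - \<delta> - w x) * w x - (w' x)\<^sup>2 * (1 - \<delta>)) / ((w x)\<^sup>2 + (w' x)\<^sup>2 * (1 - \<delta> - w x)\<^sup>2)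
    \<le> - phase_decay_rate d r \<delta> c"
proof -
  define u where "u = 1 - \<delta> - w x"
  define y z where "y = w' x" and "z = u * w x"
  define l where "l = (d * (1 - \<delta>) * r - (c / 2)\<^sup>2) / (d * (1 - \<delta>) + r)"
  define D where "D = (w x)\<^sup>2 + y\<^sup>2 * u\<^sup>2"
  have W: "0 < w x" by (rule interior_pos[OF x])
  have u: "\<delta> \<le> u" "u \<le> 1" using low W \<delta>_nonneg by (auto simp: u_def)
  have A: "0 < d * (1 - \<delta>)" using d_pos \<delta>_less_1 by simp
  have disc: "(c / 2)\<^sup>2 < d * (1 - \<delta>) * r"
    using drift_below_kpp_speed by (simp add: power_divide algebra_simps)
  have "0 \<le> l" unfolding l_def using A r_pos disc by simp
  have "d * (w'' x * u * w x - y\<^sup>2 * (1 - \<delta>)) = - (d * (1 - \<delta>) * y\<^sup>2 + 2 * (c / 2) * y * z + r * z\<^sup>2)"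
  proof -
    have dw: "d * w'' x = - c * y - r * w x * u" using ode[OF x] by (simp add: u_def y_def)
    have "d * (w'' x * u * w x - y\<^sup>2 * (1 - \<delta>)) = (d * w'' x) * u * w x - d * y\<^sup>2 * (1 - \<delta>)"
      by (simp add: algebra_simps)
    also have "\<dots> = (- c * y - r * w x * u) * u * w x - d * y\<^sup>2 * (1 - \<delta>)" by (simp only: dw)
    finally show ?thesis by (simp add: z_def algebra_simps power2_eq_square)
  qed
  also have "\<dots> \<le> - (l * (y\<^sup>2 + z\<^sup>2))"
    unfolding l_def using quadratic_form_lower_bound[OF A r_pos disc, of y z] by simp
  also have "\<dots> \<le> - (l * (\<delta>\<^sup>2 * D))"
  proof -
    have "\<delta>\<^sup>2 * (w x)\<^sup>2 \<le> z\<^sup>2"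
      unfolding z_def using u \<delta>_nonneg W by (simp add: power_mult_distrib[symmetric] power_mono)
    moreover have "\<delta>\<^sup>2 * (y\<^sup>2 * u\<^sup>2) \<le> y\<^sup>2"
    proof -
      have "\<delta> * u \<le> 1" using u \<delta>_nonneg \<delta>_less_1 by (simp add: mult_le_one)
      then have "(\<delta> * u)\<^sup>2 \<le> 1" using u \<delta>_nonneg by (simp add: power_le_one)
      then have "y\<^sup>2 * (\<delta> * u)\<^sup>2 \<le> y\<^sup>2" by (simp add: mult_left_le)
      then show ?thesis by (simp add: power_mult_distrib algebra_simps)
    qed
    ultimately have "\<delta>\<^sup>2 * D \<le> y\<^sup>2 + z\<^sup>2" by (simp add: D_def algebra_simps)
    with \<open>0 \<le> l\<close> show ?thesis by (simp add: mult_left_mono)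
  qed
  finally have "w'' x * u * w x - y\<^sup>2 * (1 - \<delta>) \<le> - (l * \<delta>\<^sup>2 / d) * D"
    using d_pos by (simp add: field_simps)
  moreover have "0 < D" using W by (simp add: D_def add_pos_nonneg)
  ultimately show ?thesis
    by (simp add: divide_le_eq u_def y_def D_def l_def phase_decay_rate_def)
qed

lemma peak_ge_if_wide:
  assumes wide: "pi \<le> R * phase_decay_rate d r \<delta> c"
  shows "1 - 2 * \<delta> \<le> (SUP x\<in>{-R..R}. w x)"
proof (rule ccontr)
  assume "\<not> 1 - 2 * \<delta> \<le> (SUP x\<in>{-R..R}. w x)"
  moreover obtain x0 where x0: "x0 \<in> {-R<..<R}" and max: "\<And>x. x \<in> {-R..R} \<Longrightarrow> w x \<le> w x0"
    using interior_max_exists by blast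
  ultimately have low: "w x < 1 - 2 * \<delta>" if "x \<in> {-R..R}" for x
    using Sup_eq_interior_max[OF x0 max] max[OF that] by simp
  define \<theta> where "\<theta> x = arctan (w' x * (1 - \<delta> - w x) / w x)" for x
  define \<theta>' where "\<theta>' x = (w'' x * (1 - \<delta> - w x) * w x - (w' x)\<^sup>2 * (1 - \<delta>))
      / ((w x)\<^sup>2 + (w' x)\<^sup>2 * (1 - \<delta> - w x)\<^sup>2)" for x
  \<comment> \<open>\<open>MVT2\<close> needs derivatives at the endpoints, hence the interval \<open>[-R/2, R/2]\<close>.\<close>
  obtain \<xi> where \<xi>: "-R/2 < \<xi>" "\<xi> < R/2" and mvt: "\<theta> (R/2) - \<theta> (-R/2) = (R/2 - -R/2) * \<theta>' \<xi>"
    using MVT2[of "-R/2" "R/2" \<theta> \<theta>'] phase_angle_has_derivative R_pos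
    unfolding \<theta>_def \<theta>'_def by force
  have "\<theta>' \<xi> \<le> - phase_decay_rate d r \<delta> c"
    unfolding \<theta>'_def using \<xi> R_pos by (intro phase_angle_deriv_le low) auto
  then have "R * \<theta>' \<xi> \<le> R * - phase_decay_rate d r \<delta> c"
    using R_pos by (intro mult_left_mono) auto
  with mvt have "\<theta> (R/2) - \<theta> (-R/2) \<le> - (R * phase_decay_rate d r \<delta> c)" by simp
  moreover have "-pi < \<theta> (R/2) - \<theta> (-R/2)"
    using arctan_bounded[of "w' (R/2) * (1 - \<delta> - w (R/2)) / w (R/2)"]
      arctan_bounded[of "w' (-R/2) * (1 - \<delta> - w (-R/2)) / w (-R/2)"] unfolding \<theta>_def by linarith
  ultimately show False using wide by linarith
qed

end

lemma omega_sol_imp_kpp_solution: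
  assumes "0 < d" "0 < r" "0 \<le> \<delta>" "\<delta> < 1" and sol: "omega_sol d r \<delta> R w"
  obtains w' w'' where "kpp_solution d r \<delta> R (2 * sqrt (r * (1 - \<delta>) * d) - \<delta>) w w' w''"
proof -
  from sol obtain w' w'' where "\<forall>x\<in>{-R<..<R}. (w has_real_derivative w' x) (at x) \<and>
      (w' has_real_derivative w'' x) (at x) \<and>
      - d * w'' x - (2 * sqrt (r * (1 - \<delta>) * d) - \<delta>) * w' x = r * w x * (1 - \<delta> - w x)"
    unfolding omega_sol_def bvp_solution_def by blast
  moreover have "0 < R"
  proof -
    obtain x where "x \<in> {-R..R}" "w x \<noteq> 0" using sol unfolding omega_sol_def by blast
    moreover have "w R = 0" using sol unfolding omega_sol_def bvp_solution_def by blast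
    ultimately show ?thesis by (cases "x = R") auto
  qed
  ultimately have "kpp_solution d r \<delta> R (2 * sqrt (r * (1 - \<delta>) * d) - \<delta>) w w' w''"
    using assms unfolding omega_sol_def bvp_solution_def by unfold_locales auto
  then show ?thesis by (rule that)
qed

lemma omega_sol_peak_if_wide:
  assumes "0 < d" "0 < r" "0 < \<delta>" "\<delta> < 1" and sol: "omega_sol d r \<delta> R w"
    and wide: "pi / phase_decay_rate d r \<delta> (2 * sqrt (r * (1 - \<delta>) * d) - \<delta>) \<le> R"
  shows "1 - 2 * \<delta> \<le> (SUP x\<in>{-R..R}. w x) \<and>
    (\<exists>!x\<^sub>0. x\<^sub>0 \<in> {-R<..<R} \<and> strict_mono_on {-R..x\<^sub>0} w \<and>
       (\<forall>a\<in>{x\<^sub>0..R}. \<forall>b\<in>{x\<^sub>0..R}. a < b \<longrightarrow> w b < w a) \<and> w x\<^sub>0 = (SUP x\<in>{-R..R}. w x))"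
proof -
  define c where "c = 2 * sqrt (r * (1 - \<delta>) * d) - \<delta>"
  obtain w' w'' where S: "kpp_solution d r \<delta> R c w w' w''"
    using omega_sol_imp_kpp_solution[OF assms(1,2) _ assms(4) sol] assms(3) unfolding c_def by auto
  have "0 < phase_decay_rate d r \<delta> c"
    using phase_decay_rate_pos[OF assms(1-4) kpp_solution.drift_below_kpp_speed[OF S]] .
  with wide have "pi \<le> R * phase_decay_rate d r \<delta> c" by (simp add: c_def divide_le_eq)
  then show ?thesis
    using kpp_solution.peak_ge_if_wide[OF S] kpp_solution.unique_peak[OF S] by blast
qed

theorem lemma4p3:
  fixes d r \<delta> :: real
  assumes "0 < d" and "0 < r" and "0 \<le> \<delta>" and "\<delta> < 1"
  shows "(\<forall>R w. 0 < R \<and> omega_sol d r \<delta> R w \<longrightarrow> (SUP x\<in>{-R..R}. w x) < 1 - \<delta>)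
    \<and> (0 < \<delta> \<longrightarrow>
        (\<exists>R\<^sub>\<delta>. omega_threshold d r \<delta> \<le> R\<^sub>\<delta> \<and>
          (\<forall>R w. R\<^sub>\<delta> \<le> R \<and> omega_sol d r \<delta> R w \<longrightarrow>
             (SUP x\<in>{-R..R}. w x) \<ge> 1 - 2 * \<delta> \<and>
             (\<exists>!x\<^sub>0. x\<^sub>0 \<in> {-R<..<R} \<and>
                strict_mono_on {-R..x\<^sub>0} w \<and>
                (\<forall>a\<in>{x\<^sub>0..R}. \<forall>b\<in>{x\<^sub>0..R}. a < b \<longrightarrow> w b < w a) \<and>
                w x\<^sub>0 = (SUP x\<in>{-R..R}. w x)))))"
proof -
  have "(SUP x\<in>{-R..R}. w x) < 1 - \<delta>" if "omega_sol d r \<delta> R w" for R w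
    using omega_sol_imp_kpp_solution[OF assms that] kpp_solution.Sup_below_capacity by metis
  moreover note omega_sol_peak_if_wide[OF assms(1,2) _ assms(4)]
  ultimately show ?thesis
    by (intro conjI impI allI exI[of _ "max (omega_threshold d r \<delta>)
      (pi / phase_decay_rate d r \<delta> (2 * sqrt (r * (1 - \<delta>) * d) - \<delta>))"]) auto
qed

end
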